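(* Consider a liquid ($l$), its vapor ($v$) and a gas ($g$), each with extensive entropy $S_k:(\mathbb R^+)^3\to\mathbb R\cup\{-\infty\}$ of $W_k=(M_k,V_k,E_k)$ satisfying: the set $C_k=\{S_k>-\infty\}$ is non-empty closed convex, $S_k$ is concave, positively homogeneous of degree 1, upper semi-continuous, and $\mathcal C^2$ on $C_k$ with $\partial S_k/\partial E>0$. Define for each phase the temperature $T_k$, pressure $p_k$ and chemical potential $\mu_k$ by $1/T_k=\partial S_k/\partial E$, $p_k/T_k=\partial S_k/\partial V$, $\mu_k=-T_k\,\partial S_k/\partial M$. Let $\Sigma=S_l(W_l)+S_g(W_g)+S_v(W_v)$. (a) Without phase transition: fix $(M,V,E)$ and $M_l,M_g,M_v\ge0$ with $M=M_l+M_g+M_v$, and suppose $\Sigma$ attains its maximum over the set $\{W_k\in C_k:\ E=E_l+E_g+E_v,\ V=V_l+V_v,\ V_g=V_v\}$ at a point lying in the interior of this constraint set (all three phases present). Then at this maximizer $T_l=T_g=T_v$ and $p_l=p_g+p_v$ (Dalton's law). (b) With phase transition: fix $(M,V,E)$ and $M_g$, and suppose $\Sigma$ attains its maximum over $\{W_k\in C_k:\ M-M_g=M_l+M_v,\ E=E_l+E_g+E_v,\ V=V_l+V_v,\ V_g=V_v\}$ at an interior point. Then at this maximizer $T_l=T_g=T_v$, $p_l=p_g+p_v$, and moreover $\mu_l=\mu_v$.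
   Context: The volume constraints $V=V_l+V_v$, $V_g=V_v$ encode that the vapor and gas are miscible (occupy the same volume) while the liquid is immiscible with them. The gas does not exchange mass with the other phases. *)

theory Defs
  imports "HOL-Analysis.Analysis"
begin

text \<open>States W = (M, V, E) :: real \<times> real \<times> real (mass, volume, energy).
  An entropy with values in real \<union> {-\<infinity>} is represented by its finiteness
  domain C = {S > -\<infinity>} together with a real-valued function s on C.\<close>

type_synonym state = "real \<times> real \<times> real"

definition ext_entropy :: "state set \<Rightarrow> (state \<Rightarrow> real) \<Rightarrow> state \<Rightarrow> ereal" where
  "ext_entropy C s W = (if W \<in> C then ereal (s W) else -\<infinity>)"

definition nonneg_orthant :: "state set" where
  "nonneg_orthant = {(M, V, E). 0 \<le> M \<and> 0 \<le> V \<and> 0 \<le> E}"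

definition C2_on :: "state set \<Rightarrow> (state \<Rightarrow> real) \<Rightarrow> bool" where
  "C2_on U f \<longleftrightarrow>
     (\<exists>(f' :: state \<Rightarrow> state \<Rightarrow>\<^sub>L real) (f'' :: state \<Rightarrow> state \<Rightarrow>\<^sub>L (state \<Rightarrow>\<^sub>L real)).
        (\<forall>x\<in>U. (f has_derivative blinfun_apply (f' x)) (at x)) \<and>
        (\<forall>x\<in>U. (f' has_derivative blinfun_apply (f'' x)) (at x)) \<and>
        continuous_on U f'')"

definition dS_dM :: "(state \<Rightarrow> real) \<Rightarrow> state \<Rightarrow> real" where
  "dS_dM s W = frechet_derivative s (at W) (1, 0, 0)"
definition dS_dV :: "(state \<Rightarrow> real) \<Rightarrow> state \<Rightarrow> real" where
  "dS_dV s W = frechet_derivative s (at W) (0, 1, 0)"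
definition dS_dE :: "(state \<Rightarrow> real) \<Rightarrow> state \<Rightarrow> real" where
  "dS_dE s W = frechet_derivative s (at W) (0, 0, 1)"

definition temperature :: "(state \<Rightarrow> real) \<Rightarrow> state \<Rightarrow> real" where
  "temperature s W = 1 / dS_dE s W"
definition pressure :: "(state \<Rightarrow> real) \<Rightarrow> state \<Rightarrow> real" where
  "pressure s W = temperature s W * dS_dV s W"
definition chem_potential :: "(state \<Rightarrow> real) \<Rightarrow> state \<Rightarrow> real" where
  "chem_potential s W = - temperature s W * dS_dM s W"

definition entropy :: "state set \<Rightarrow> (state \<Rightarrow> real) \<Rightarrow> bool" where
  "entropy C s \<longleftrightarrow>
     C \<noteq> {} \<and> closed C \<and> convex C \<and> C \<subseteq> nonneg_orthant \<and>
     concave_on C s \<and>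
     (\<forall>(c::real) W. c > 0 \<longrightarrow> ext_entropy C s (c *\<^sub>R W) = ereal c * ext_entropy C s W) \<and>
     (\<forall>W. Limsup (at W) (ext_entropy C s) \<le> ext_entropy C s W) \<and>
     C2_on (interior C) s \<and>
     (\<forall>W\<in>interior C. dS_dE s W > 0)"

end

theory Submission
  imports Defs
begin

text \<open>At an interior maximiser of the total entropy every admissible exchange of mass, volume
  or energy between the phases defines a line through the maximiser inside the constraint set;
  the total entropy restricted to that line is differentiable with a local maximum at the
  maximiser, so its derivative, a combination of partial derivatives of the three entropies,
  vanishes. Exchanging energy between two phases equates their temperatures, moving volume
  from the liquid to the common volume of vapour and gas gives Dalton's law, and (with phase
  transition) moving mass from liquid to vapour equates the chemical potentials.\<close>

lemma eventually_nhds_line_mem: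
  fixes W d :: "'a::real_normed_vector"
  assumes "W \<in> interior C"
  shows "\<forall>\<^sub>F t in nhds 0. W + t *\<^sub>R d \<in> C"
proof -
  have "((\<lambda>t. W + t *\<^sub>R d) \<longlongrightarrow> W + 0 *\<^sub>R d) (nhds 0)"
    by (intro tendsto_intros filterlim_ident)
  then have "\<forall>\<^sub>F t in nhds 0. W + t *\<^sub>R d \<in> interior C"
    using assms by (intro topological_tendstoD) auto
  then show ?thesis
    by eventually_elim (use interior_subset in blast)
qed

lemma has_real_derivative_along_line:
  fixes s :: "'a::real_normed_vector \<Rightarrow> real"
  assumes "(s has_derivative F) (at W)"
  shows "((\<lambda>t. s (W + t *\<^sub>R d)) has_real_derivative F d) (at 0)"
proof -
  have "((\<lambda>t. W + t *\<^sub>R d) has_derivative (\<lambda>t. t *\<^sub>R d)) (at 0)"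
    by (auto intro!: derivative_eq_intros)
  with assms have "((\<lambda>t. s (W + t *\<^sub>R d)) has_derivative (\<lambda>t. F (t *\<^sub>R d))) (at 0)"
    using diff_chain_at[of "\<lambda>t. W + t *\<^sub>R d" _ 0 s F] by (simp add: o_def)
  moreover have "(\<lambda>t. F (t *\<^sub>R d)) = (*) (F d)"
    using linear_cmul[OF has_derivative_linear[OF assms]] by (auto simp: mult.commute)
  ultimately show ?thesis
    by (simp add: has_field_derivative_def)
qed

lemma sum3_derivatives_eq_0_if_max_along_line:
  fixes s1 s2 s3 :: "'a::real_normed_vector \<Rightarrow> real"
  assumes "W1 \<in> interior C1" "W2 \<in> interior C2" "W3 \<in> interior C3"
    and "(s1 has_derivative F1) (at W1)" "(s2 has_derivative F2) (at W2)"
    and "(s3 has_derivative F3) (at W3)"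
    and max: "\<And>t. W1 + t *\<^sub>R a \<in> C1 \<Longrightarrow> W2 + t *\<^sub>R b \<in> C2 \<Longrightarrow> W3 + t *\<^sub>R c \<in> C3 \<Longrightarrow>
       s1 (W1 + t *\<^sub>R a) + s2 (W2 + t *\<^sub>R b) + s3 (W3 + t *\<^sub>R c) \<le> s1 W1 + s2 W2 + s3 W3"
  shows "F1 a + F2 b + F3 c = 0"
proof -
  define g where "g t = s1 (W1 + t *\<^sub>R a) + s2 (W2 + t *\<^sub>R b) + s3 (W3 + t *\<^sub>R c)" for t
  have "(g has_real_derivative F1 a + F2 b + F3 c) (at 0)"
    unfolding g_def using assms(4-6) by (intro DERIV_add has_real_derivative_along_line)
  moreover have "\<forall>\<^sub>F t in nhds 0. g t \<le> g 0"
    using eventually_nhds_line_mem[OF assms(1), of a] eventually_nhds_line_mem[OF assms(2), of b]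
      eventually_nhds_line_mem[OF assms(3), of c]
    by eventually_elim (simp add: g_def max)
  then have "\<forall>\<^sub>F t in at 0. g t \<le> g 0"
    by (simp add: eventually_at_filter eventually_mono)
  ultimately have "(*) (F1 a + F2 b + F3 c) = (\<lambda>h. 0)"
    by (intro has_derivative_local_max) (simp_all add: has_field_derivative_def)
  then show ?thesis
    by (metis mult.right_neutral)
qed

lemma entropy_has_derivative:
  assumes "entropy C s" "W \<in> interior C"
  shows "(s has_derivative frechet_derivative s (at W)) (at W)"
proof -
  obtain f' :: "state \<Rightarrow> state \<Rightarrow>\<^sub>L real"
    where "\<forall>x\<in>interior C. (s has_derivative blinfun_apply (f' x)) (at x)"
    using assms(1) unfolding entropy_def C2_on_def by blast
  with assms(2) have "s differentiable at W"
    by (auto simp: differentiable_def)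
  then show ?thesis
    by (rule frechet_derivative_works[THEN iffD1])
qed

lemma entropy_derivative_eq:
  assumes "entropy C s" "W \<in> interior C"
  shows "frechet_derivative s (at W) (m, v, e) = m * dS_dM s W + v * dS_dV s W + e * dS_dE s W"
proof -
  have lin: "linear (frechet_derivative s (at W))"
    using has_derivative_linear[OF entropy_has_derivative[OF assms]] .
  have "frechet_derivative s (at W) (m, v, e)
      = frechet_derivative s (at W) (m *\<^sub>R (1, 0, 0) + v *\<^sub>R (0, 1, 0) + e *\<^sub>R (0, 0, 1))"
    by simp
  then show ?thesis
    by (simp only: dS_dM_def dS_dV_def dS_dE_def linear_add[OF lin] linear_cmul[OF lin] real_scaleR_def)
qed

lemma entropy_stationary_along_line:
  assumes "entropy C1 s1" "entropy C2 s2" "entropy C3 s3"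
    and "W1 \<in> interior C1" "W2 \<in> interior C2" "W3 \<in> interior C3"
    and "\<And>t. W1 + t *\<^sub>R a \<in> C1 \<Longrightarrow> W2 + t *\<^sub>R b \<in> C2 \<Longrightarrow> W3 + t *\<^sub>R c \<in> C3 \<Longrightarrow>
       s1 (W1 + t *\<^sub>R a) + s2 (W2 + t *\<^sub>R b) + s3 (W3 + t *\<^sub>R c) \<le> s1 W1 + s2 W2 + s3 W3"
  shows "frechet_derivative s1 (at W1) a + frechet_derivative s2 (at W2) b
    + frechet_derivative s3 (at W3) c = 0"
  using assms(4-6) entropy_has_derivative[OF assms(1,4)] entropy_has_derivative[OF assms(2,5)]
    entropy_has_derivative[OF assms(3,6)] assms(7)
  by (rule sum3_derivatives_eq_0_if_max_along_line)

lemma thermal_and_mechanical_equilibrium: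
  assumes ent: "entropy Cl sl" "entropy Cg sg" "entropy Cv sv"
    and int: "(Ml, Vl, El) \<in> interior Cl" "(Mg, Vv, Eg) \<in> interior Cg"
      "(Mv, Vv, Ev) \<in> interior Cv"
    and max: "\<And>Vl' Vv' El' Eg' Ev'. (Ml, Vl', El') \<in> Cl \<Longrightarrow> (Mg, Vv', Eg') \<in> Cg \<Longrightarrow>
       (Mv, Vv', Ev') \<in> Cv \<Longrightarrow> El' + Eg' + Ev' = El + Eg + Ev \<Longrightarrow> Vl' + Vv' = Vl + Vv \<Longrightarrow>
       sl (Ml, Vl', El') + sg (Mg, Vv', Eg') + sv (Mv, Vv', Ev')
         \<le> sl (Ml, Vl, El) + sg (Mg, Vv, Eg) + sv (Mv, Vv, Ev)"
  shows "temperature sl (Ml, Vl, El) = temperature sg (Mg, Vv, Eg)"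
    and "temperature sg (Mg, Vv, Eg) = temperature sv (Mv, Vv, Ev)"
    and "pressure sl (Ml, Vl, El) = pressure sg (Mg, Vv, Eg) + pressure sv (Mv, Vv, Ev)"
proof -
  note stationary = entropy_stationary_along_line[OF ent int]
  note components = entropy_derivative_eq[OF ent(1) int(1)] entropy_derivative_eq[OF ent(2) int(2)]
    entropy_derivative_eq[OF ent(3) int(3)]
  have El_Eg: "dS_dE sl (Ml, Vl, El) = dS_dE sg (Mg, Vv, Eg)"
    using stationary[of "(0, 0, 1)" "(0, 0, -1)" "(0, 0, 0)"] max[of Vl "El + t" Vv "Eg - t" Ev for t]
    by (simp add: components)
  have Eg_Ev: "dS_dE sg (Mg, Vv, Eg) = dS_dE sv (Mv, Vv, Ev)"
    using stationary[of "(0, 0, 0)" "(0, 0, 1)" "(0, 0, -1)"] max[of Vl El Vv "Eg + t" "Ev - t" for t]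
    by (simp add: components)
  have Vl_Vv: "dS_dV sl (Ml, Vl, El) = dS_dV sg (Mg, Vv, Eg) + dS_dV sv (Mv, Vv, Ev)"
    using stationary[of "(0, -1, 0)" "(0, 1, 0)" "(0, 1, 0)"] max[of "Vl - t" El "Vv + t" Eg Ev for t]
    by (simp add: components)
  show "temperature sl (Ml, Vl, El) = temperature sg (Mg, Vv, Eg)"
    and "temperature sg (Mg, Vv, Eg) = temperature sv (Mv, Vv, Ev)"
    and "pressure sl (Ml, Vl, El) = pressure sg (Mg, Vv, Eg) + pressure sv (Mv, Vv, Ev)"
    using El_Eg Eg_Ev Vl_Vv by (simp_all add: temperature_def pressure_def ring_distribs)
qed

lemma chemical_equilibrium:
  assumes ent: "entropy Cl sl" "entropy Cg sg" "entropy Cv sv"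
    and int: "(Ml, Vl, El) \<in> interior Cl" "(Mg, Vg, Eg) \<in> interior Cg" "(Mv, Vv, Ev) \<in> interior Cv"
    and max: "\<And>Ml' Mv'. (Ml', Vl, El) \<in> Cl \<Longrightarrow> (Mv', Vv, Ev) \<in> Cv \<Longrightarrow> Ml' + Mv' = Ml + Mv \<Longrightarrow>
       sl (Ml', Vl, El) + sv (Mv', Vv, Ev) \<le> sl (Ml, Vl, El) + sv (Mv, Vv, Ev)"
    and "temperature sl (Ml, Vl, El) = temperature sv (Mv, Vv, Ev)"
  shows "chem_potential sl (Ml, Vl, El) = chem_potential sv (Mv, Vv, Ev)"
proof -
  have "dS_dM sl (Ml, Vl, El) = dS_dM sv (Mv, Vv, Ev)"
    using entropy_stationary_along_line[OF ent int, of "(1, 0, 0)" "(0, 0, 0)" "(-1, 0, 0)"]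
      max[of "Ml + t" "Mv - t" for t]
    by (simp add: entropy_derivative_eq[OF ent(1) int(1)] entropy_derivative_eq[OF ent(2) int(2)]
        entropy_derivative_eq[OF ent(3) int(3)])
  with assms(8) show ?thesis
    by (simp add: chem_potential_def)
qed

theorem proposition2p2:
  fixes Cl Cg Cv :: "state set" and sl sg sv :: "state \<Rightarrow> real"
  assumes "entropy Cl sl" and "entropy Cg sg" and "entropy Cv sv"
  shows
   "(\<forall>M V E Ml Mg Mv Vl Vg Vv El Eg Ev.
       0 \<le> Ml \<and> 0 \<le> Mg \<and> 0 \<le> Mv \<and> M = Ml + Mg + Mv \<and>
       (Ml, Vl, El) \<in> Cl \<and> (Mg, Vg, Eg) \<in> Cg \<and> (Mv, Vv, Ev) \<in> Cv \<and>
       E = El + Eg + Ev \<and> V = Vl + Vv \<and> Vg = Vv \<and>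
       (\<forall>Vl' Vg' Vv' El' Eg' Ev'.
          (Ml, Vl', El') \<in> Cl \<and> (Mg, Vg', Eg') \<in> Cg \<and> (Mv, Vv', Ev') \<in> Cv \<and>
          E = El' + Eg' + Ev' \<and> V = Vl' + Vv' \<and> Vg' = Vv' \<longrightarrow>
          sl (Ml, Vl', El') + sg (Mg, Vg', Eg') + sv (Mv, Vv', Ev')
            \<le> sl (Ml, Vl, El) + sg (Mg, Vg, Eg) + sv (Mv, Vv, Ev)) \<and>
       (Ml, Vl, El) \<in> interior Cl \<and> (Mg, Vg, Eg) \<in> interior Cg \<and> (Mv, Vv, Ev) \<in> interior Cv
     \<longrightarrow>
       temperature sl (Ml, Vl, El) = temperature sg (Mg, Vg, Eg) \<and>
       temperature sg (Mg, Vg, Eg) = temperature sv (Mv, Vv, Ev) \<and>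
       pressure sl (Ml, Vl, El) = pressure sg (Mg, Vg, Eg) + pressure sv (Mv, Vv, Ev))
  \<and>
   (\<forall>M V E Mg Ml Mv Vl Vg Vv El Eg Ev.
       (Ml, Vl, El) \<in> Cl \<and> (Mg, Vg, Eg) \<in> Cg \<and> (Mv, Vv, Ev) \<in> Cv \<and>
       M - Mg = Ml + Mv \<and> E = El + Eg + Ev \<and> V = Vl + Vv \<and> Vg = Vv \<and>
       (\<forall>Ml' Mv' Vl' Vg' Vv' El' Eg' Ev'.
          (Ml', Vl', El') \<in> Cl \<and> (Mg, Vg', Eg') \<in> Cg \<and> (Mv', Vv', Ev') \<in> Cv \<and>
          M - Mg = Ml' + Mv' \<and> E = El' + Eg' + Ev' \<and> V = Vl' + Vv' \<and> Vg' = Vv' \<longrightarrow>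
          sl (Ml', Vl', El') + sg (Mg, Vg', Eg') + sv (Mv', Vv', Ev')
            \<le> sl (Ml, Vl, El) + sg (Mg, Vg, Eg) + sv (Mv, Vv, Ev)) \<and>
       (Ml, Vl, El) \<in> interior Cl \<and> (Mg, Vg, Eg) \<in> interior Cg \<and> (Mv, Vv, Ev) \<in> interior Cv
     \<longrightarrow>
       temperature sl (Ml, Vl, El) = temperature sg (Mg, Vg, Eg) \<and>
       temperature sg (Mg, Vg, Eg) = temperature sv (Mv, Vv, Ev) \<and>
       pressure sl (Ml, Vl, El) = pressure sg (Mg, Vg, Eg) + pressure sv (Mv, Vv, Ev) \<and>
       chem_potential sl (Ml, Vl, El) = chem_potential sv (Mv, Vv, Ev))"
  apply (rule conjI; intro allI impI; elim conjE)
  subgoal for M V E Ml Mg Mv Vl Vg Vv El Eg Ev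
    using thermal_and_mechanical_equilibrium[OF assms, of Ml Vl El Mg Vv Eg Mv Ev] by fastforce
  subgoal for M V E Mg Ml Mv Vl Vg Vv El Eg Ev
    using thermal_and_mechanical_equilibrium[OF assms, of Ml Vl El Mg Vv Eg Mv Ev]
      chemical_equilibrium[OF assms, of Ml Vl El Mg Vg Eg Mv Vv Ev] by fastforce
  done

end
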